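(* Let $N,w,h$ be positive integers with $N/h\leq w\leq N-h+1$, and let $$f_N(w,h)=\max\Big\{\sum_{l=1}^{|\Lambda|}N_l^2\ :\ \Lambda \text{ a partition of }\{1,\dots,N\}\text{ with }\max\Lambda\leq w,\ |\Lambda|\geq h\Big\}.$$ Then $f_N(w,h)\leq w(N-h)+N$.
   Context: A partition $\Lambda=\{A_1,\dots,A_{|\Lambda|}\}$ of $\{1,\dots,N\}$ is a collection of nonempty pairwise disjoint subsets whose union is $\{1,\dots,N\}$; $|\Lambda|$ is the number of subsets, $N_l=|A_l|$, and $\max\Lambda=\max_lN_l$. *)

theory Defs
  imports Complex_Main "HOL-Library.Disjoint_Sets"
begin

definition max_block :: "nat set set \<Rightarrow> nat" where
  "max_block \<Lambda> = Max (card ` \<Lambda>)"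

definition fN :: "nat \<Rightarrow> nat \<Rightarrow> nat \<Rightarrow> nat" where
  "fN N w h = Max {(\<Sum>A\<in>\<Lambda>. (card A)^2) | \<Lambda>.
      partition_on {1..N} \<Lambda> \<and> max_block \<Lambda> \<le> w \<and> card \<Lambda> \<ge> h}"

end

theory Submission
  imports Defs
begin

text \<open>A block of size \<open>c \<le> w\<close> satisfies \<open>c\<^sup>2 \<le> c + w (c - 1)\<close>. Summing over the blocks of a
partition of an \<open>N\<close>-set into at least \<open>h\<close> blocks gives
\<open>\<Sum> N\<^sub>l\<^sup>2 \<le> N + w (N - |\<Lambda>|) \<le> N + w (N - h)\<close>. The maximum defining \<open>f\<^sub>N(w, h)\<close> is attained,
because there are finitely many partitions and the partition into singletons is admissible.\<close>

lemma square_le_add_mult_pred: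
  fixes c w :: "'a::linordered_idom"
  assumes "1 \<le> c" "c \<le> w"
  shows "c\<^sup>2 \<le> c + w * (c - 1)"
proof -
  have "c * (c - 1) \<le> w * (c - 1)"
    using assms by (intro mult_right_mono) auto
  then show ?thesis
    by (simp add: power2_eq_square algebra_simps)
qed

lemma sum_card_partition_on:
  assumes "finite A" "partition_on A P"
  shows "(\<Sum>B\<in>P. card B) = card A"
proof -
  have "\<And>B. B \<in> P \<Longrightarrow> finite B"
    using assms partition_onD1 by (metis Union_upper finite_subset)
  then show ?thesis
    using card_Union_disjoint[OF partition_onD2[OF assms(2)]] partition_onD1[OF assms(2)]
    by simp
qed

lemma sum_square_card_partition_on_le:
  assumes "finite A" and P: "partition_on A P" and small: "\<And>B. B \<in> P \<Longrightarrow> card B \<le> w"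
  shows "int (\<Sum>B\<in>P. (card B)\<^sup>2) \<le> int (card A) + int w * (int (card A) - int (card P))"
proof -
  have nonempty: "1 \<le> card B" if "B \<in> P" for B
    using that partition_onD3[OF P] partition_onD1[OF P] \<open>finite A\<close>
    by (metis Union_upper card_0_eq finite_subset less_one not_less)
  have "int (\<Sum>B\<in>P. (card B)\<^sup>2) = (\<Sum>B\<in>P. (int (card B))\<^sup>2)"
    by simp
  also have "\<dots> \<le> (\<Sum>B\<in>P. int (card B) + int w * (int (card B) - 1))"
    using nonempty small by (intro sum_mono square_le_add_mult_pred) auto
  also have "\<dots> = int (card A) + int w * (int (card A) - int (card P))"
    using sum_card_partition_on[OF assms(1,2)]
    by (simp add: sum.distrib sum_subtractf flip: sum_distrib_left of_nat_sum)
  finally show ?thesis .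
qed

lemma card_le_max_block:
  assumes "finite P" "B \<in> P"
  shows "card B \<le> max_block P"
  using assms by (simp add: max_block_def)

lemma fN_attained:
  assumes "0 < h" "h \<le> N" "1 \<le> w"
  obtains \<Lambda> where "partition_on {1..N} \<Lambda>" "max_block \<Lambda> \<le> w" "h \<le> card \<Lambda>"
    "fN N w h = (\<Sum>A\<in>\<Lambda>. (card A)\<^sup>2)"
proof -
  let ?admissible = "\<lambda>\<Lambda>. partition_on {1..N} \<Lambda> \<and> max_block \<Lambda> \<le> w \<and> card \<Lambda> \<ge> h"
  let ?S = "{(\<Sum>A\<in>\<Lambda>. (card A)\<^sup>2) | \<Lambda>. ?admissible \<Lambda>}"
  have "finite ?S"
  proof (rule finite_subset)
    show "?S \<subseteq> (\<lambda>\<Lambda>. \<Sum>A\<in>\<Lambda>. (card A)\<^sup>2) ` {\<Lambda>. partition_on {1..N} \<Lambda>}"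
      by auto
  qed (simp add: finitely_many_partition_on)
  moreover have "?admissible ((\<lambda>x. {x}) ` {1..N})"
    using assms by (simp add: partition_on_singletons card_image max_block_def image_image
        image_constant_conv)
  then have "?S \<noteq> {}"
    by blast
  ultimately have "fN N w h \<in> ?S"
    unfolding fN_def by (rule Max_in)
  then show ?thesis
    using that by blast
qed

theorem lemma2:
  fixes N w h :: nat
  assumes "N > 0" "w > 0" "h > 0"
    and "real N / real h \<le> real w" "int w \<le> int N - int h + 1"
  shows "int (fN N w h) \<le> int w * (int N - int h) + int N"
proof -
  have "0 < h" "h \<le> N" "1 \<le> w"
    using assms(2,3,5) by linarith+
  then obtain \<Lambda> where \<Lambda>: "partition_on {1..N} \<Lambda>" "max_block \<Lambda> \<le> w" "h \<le> card \<Lambda>"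
    and max: "fN N w h = (\<Sum>A\<in>\<Lambda>. (card A)\<^sup>2)"
    by (rule fN_attained)
  have "\<And>A. A \<in> \<Lambda> \<Longrightarrow> card A \<le> w"
    using \<Lambda>(1,2) card_le_max_block finite_elements by (metis finite_atLeastAtMost le_trans)
  then have "int (fN N w h) \<le> int N + int w * (int N - int (card \<Lambda>))"
    using max sum_square_card_partition_on_le[OF _ \<Lambda>(1)] by simp
  also have "\<dots> \<le> int w * (int N - int h) + int N"
    using mult_left_mono[of "int h" "int (card \<Lambda>)" "int w"] \<Lambda>(3)
    by (simp add: right_diff_distrib)
  finally show ?thesis .
qed

end
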